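(* Let $\lambda\neq0$ and $x$ be fixed, and let \[ F=F(t;x,\lambda)=\frac{2\lambda}{2\lambda+\log(1+\lambda t)}\Bigl(1+\lambda^{-1}\log(1+\lambda t)\Bigr)^{x}, \] considered for $t$ in a neighborhood of $0$ (or as a formal power series in $t$). Then for every integer $N\ge1$, $F$ satisfies the linear differential equation \[ \frac{d^N F}{dt^N}=\lambda^{N}(1+\lambda t)^{-N}\left(\sum_{r=1}^{N}\sum_{i=0}^{r}a^{(\lambda)}_{i,r-i}(N,x)\,\bigl(2\lambda+\log(1+\lambda t)\bigr)^{-i}\bigl(\lambda+\log(1+\lambda t)\bigr)^{-(r-i)}\right)F, \] where, for $1\le r\le N$ and $0\le i\le r$, \[ a^{(\lambda)}_{i,r-i}(N,x)=(-1)^{N+i-r}\, i!\, S_{1,i-1}(r-i)\,(N-1)!\,H_{N-1,r-1}\,(x)_{r-i}. \]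
   Context: $(x)_0=1$ and $(x)_n=x(x-1)\cdots(x-n+1)$ for $n\ge1$. Generalized harmonic numbers: $H_{N,0}=1$ for all integers $N\ge 0$; $H_{N,1}=1+\frac12+\cdots+\frac1N$ for $N\ge1$; and for $2\le j\le N$, $H_{N,j}=\frac{H_{N-1,j-1}}{N}+\frac{H_{N-2,j-1}}{N-1}+\cdots+\frac{H_{j-1,j-1}}{j}$. Generalized Changhee power sums (for $k=1$), for integers $N\ge0$: $S_{1,-1}(N)=1$, $S_{1,0}(N)=N+1$, $S_{1,j}(N)=\sum_{l=0}^{N}S_{1,j-1}(l)$ for $j\ge1$. *)

theory Defs
  imports "HOL-Analysis.Analysis"
begin

definition falling :: "real \<Rightarrow> nat \<Rightarrow> real" where
  "falling x n = (\<Prod>k<n. x - real k)"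

fun genH :: "nat \<Rightarrow> nat \<Rightarrow> real" where
  "genH N 0 = 1"
| "genH N (Suc j) = (\<Sum>m\<in>{Suc j..N}. genH (m - 1) j / real m)"

text \<open>Generalized Changhee power sums, index shifted by one:
  changheeS j N = S_{1,j-1}(N).\<close>
fun changheeS :: "nat \<Rightarrow> nat \<Rightarrow> nat" where
  "changheeS 0 N = 1"
| "changheeS (Suc 0) N = N + 1"
| "changheeS (Suc (Suc j)) N = (\<Sum>l\<le>N. changheeS (Suc j) l)"

definition coeffA :: "nat \<Rightarrow> nat \<Rightarrow> nat \<Rightarrow> real \<Rightarrow> real" where
  "coeffA i r N x = (-1) ^ (N + i - r) * fact i * real (changheeS i (r - i))
      * fact (N - 1) * genH (N - 1) (r - 1) * falling x (r - i)"

definition Ffun :: "real \<Rightarrow> real \<Rightarrow> real \<Rightarrow> real" where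
  "Ffun x lam t = 2 * lam / (2 * lam + ln (1 + lam * t))
      * (1 + ln (1 + lam * t) / lam) powr x"

end

theory Submission
  imports Defs "HOL-Combinatorics.Stirling"
begin

(* Write F(t) = Psi(ln (1 + lam t)) with Psi(u) = 2 lam / (2 lam + u) * (1 + u / lam)^x.
   Leibniz' rule expresses the r-th derivative of Psi as a binomial sum of derivatives of
   1 / (2 lam + u) and of (1 + u / lam)^x, each an explicit multiple of Psi.  For u = ln (1 + lam t)
   one has d^N/dt^N = (lam / (1 + lam t))^N * sum_r s(N,r) d^r/du^r with the signed Stirling
   numbers of the first kind s(N,r), by their recurrence s(N+1,r) = s(N,r-1) - N s(N,r).
   The coefficients of the theorem are exactly these products, since (N-1)! H_{N-1,r-1} is the
   Stirling number [N,r] and S_{1,i-1}(r-i) is the binomial coefficient (r choose i). *)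

lemma changheeS_eq_binomial: "changheeS i j = (i + j) choose i"
proof (induction i j rule: changheeS.induct)
  case (3 i N)
  have "(\<Sum>l\<le>N. changheeS (Suc i) l) = (\<Sum>l\<le>N. (Suc i + l) choose l)"
    using 3 by (intro sum.cong refl) (metis binomial_symmetric le_add1 add_diff_cancel_left')
  also have "\<dots> = Suc (Suc i + N) choose N" by (rule sum_choose_lower)
  also have "\<dots> = (Suc (Suc i) + N) choose Suc (Suc i)"
    by (subst binomial_symmetric) auto
  finally show ?case by simp
qed auto

lemma genH_eq_0: "n < j \<Longrightarrow> genH n j = 0"
  by (cases j) auto

lemma genH_Suc_Suc: "genH (Suc m) (Suc j) = genH m (Suc j) + genH m j / real (Suc m)"
  by (auto simp: genH_eq_0)

lemma fact_mult_genH_eq_stirling: "fact n * genH n j = real (stirling (Suc n) (Suc j))"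
proof (induction n arbitrary: j)
  case 0
  show ?case by (cases j) auto
next
  case (Suc m)
  show ?case
  proof (cases j)
    case 0
    then show ?thesis by (simp add: stirling_Suc_n_1 algebra_simps del: stirling.simps)
  next
    case (Suc k)
    have "fact (Suc m) * genH (Suc m) (Suc k)
        = real (Suc m) * (fact m * genH m (Suc k)) + fact m * genH m k"
      by (simp add: genH_Suc_Suc fact_Suc field_simps del: genH.simps)
    then show ?thesis using Suc.IH Suc by (simp add: algebra_simps del: genH.simps)
  qed
qed

definition signed_stirling :: "nat \<Rightarrow> nat \<Rightarrow> real" where
  "signed_stirling n k = (-1) ^ (n + k) * real (stirling n k)"

lemma signed_stirling_Suc_Suc:
  "signed_stirling (Suc n) (Suc k) = signed_stirling n k - real n * signed_stirling n (Suc k)"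
  by (simp add: signed_stirling_def algebra_simps)

lemma sum_signed_stirling_Suc:
  fixes a :: "nat \<Rightarrow> real"
  shows "(\<Sum>k\<le>Suc n. signed_stirling (Suc n) k * a k)
       = (\<Sum>k\<le>n. signed_stirling n k * a (Suc k))
         - real n * (\<Sum>k\<le>n. signed_stirling n k * a k)"
proof -
  have "(\<Sum>k\<le>Suc n. signed_stirling (Suc n) k * a k)
      = (\<Sum>k\<le>n. signed_stirling n k * a (Suc k))
        - real n * (\<Sum>k\<le>n. signed_stirling n (Suc k) * a (Suc k))"
    by (simp add: sum.atMost_Suc_shift signed_stirling_Suc_Suc signed_stirling_def[of _ 0]
        left_diff_distrib sum_subtractf sum_distrib_left mult.assoc del: sum.atMost_Suc)
  also have "real n * (\<Sum>k\<le>n. signed_stirling n (Suc k) * a (Suc k))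
      = real n * (\<Sum>k\<le>n. signed_stirling n k * a k)"
  proof (cases "n = 0")
    case False
    have "(\<Sum>k\<le>n. signed_stirling n (Suc k) * a (Suc k))
        = (\<Sum>k\<le>Suc n. signed_stirling n k * a k) - signed_stirling n 0 * a 0"
      by (simp add: sum.atMost_Suc_shift del: sum.atMost_Suc)
    then show ?thesis using False by (simp add: signed_stirling_def)
  qed simp
  finally show ?thesis .
qed

lemma sum_binomial_Suc_shift:
  fixes h :: "nat \<Rightarrow> real"
  shows "(\<Sum>i\<le>Suc r. real (Suc r choose i) * h i)
       = (\<Sum>i\<le>r. real (r choose i) * (h (Suc i) + h i))"
proof -
  have "(\<Sum>i\<le>r. real (r choose i) * h i) = (\<Sum>i\<le>Suc r. real (r choose i) * h i)"
    by simp
  also have "\<dots> = h 0 + (\<Sum>i\<le>r. real (r choose Suc i) * h (Suc i))"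
    by (simp add: sum.atMost_Suc_shift del: sum.atMost_Suc)
  finally show ?thesis
    by (simp add: sum.atMost_Suc_shift sum.distrib algebra_simps del: sum.atMost_Suc)
qed

lemma DERIV_Leibniz_sum:
  fixes f g :: "nat \<Rightarrow> real \<Rightarrow> real"
  assumes f: "\<And>k. (f k has_real_derivative f (Suc k) u) (at u)"
      and g: "\<And>k. (g k has_real_derivative g (Suc k) u) (at u)"
  shows "((\<lambda>u. \<Sum>i\<le>r. real (r choose i) * f i u * g (r - i) u) has_real_derivative
           (\<Sum>i\<le>Suc r. real (Suc r choose i) * f i u * g (Suc r - i) u)) (at u)"
proof -
  have "((\<lambda>u. \<Sum>i\<le>r. real (r choose i) * f i u * g (r - i) u) has_real_derivative
      (\<Sum>i\<le>r. real (r choose i)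
        * (f (Suc i) u * g (r - i) u + f i u * g (Suc (r - i)) u))) (at u)"
    by (auto intro!: derivative_eq_intros f g simp: algebra_simps)
  moreover have "(\<Sum>i\<le>r. real (r choose i)
        * (f (Suc i) u * g (r - i) u + f i u * g (Suc (r - i)) u))
      = (\<Sum>i\<le>Suc r. real (Suc r choose i) * (f i u * g (Suc r - i) u))"
    unfolding sum_binomial_Suc_shift by (intro sum.cong refl) (simp add: Suc_diff_le)
  ultimately show ?thesis by (simp add: mult.assoc)
qed

lemma deriv_funpow_eq_on_open:
  fixes f :: "nat \<Rightarrow> real \<Rightarrow> real"
  assumes "open S" and f: "\<And>k t. t \<in> S \<Longrightarrow> (f k has_real_derivative f (Suc k) t) (at t)"
    and "t \<in> S"
  shows "(deriv ^^ n) (f 0) t = f n t"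
  using \<open>t \<in> S\<close>
proof (induction n arbitrary: t)
  case (Suc n)
  have "\<forall>\<^sub>F y in nhds t. (deriv ^^ n) (f 0) y = f n y"
    using Suc \<open>open S\<close> by (auto simp: eventually_nhds)
  then have "deriv ((deriv ^^ n) (f 0)) t = deriv (f n) t"
    by (rule deriv_cong_ev) simp
  also have "\<dots> = f (Suc n) t"
    using f[OF Suc.prems] by (rule DERIV_imp_deriv)
  finally show ?case by simp
qed simp

lemma deriv_funpow_comp_ln_affine:
  fixes \<Phi> :: "nat \<Rightarrow> real \<Rightarrow> real" and lam :: real
  assumes "open S" and pos: "\<And>t. t \<in> S \<Longrightarrow> 1 + lam * t > 0"
    and \<Phi>: "\<And>k t. t \<in> S \<Longrightarrow>
      (\<Phi> k has_real_derivative \<Phi> (Suc k) (ln (1 + lam * t))) (at (ln (1 + lam * t)))"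
    and "t \<in> S"
  shows "(deriv ^^ n) (\<lambda>t. \<Phi> 0 (ln (1 + lam * t))) t
       = (lam / (1 + lam * t)) ^ n * (\<Sum>k\<le>n. signed_stirling n k * \<Phi> k (ln (1 + lam * t)))"
proof -
  define G where "G n = (\<lambda>t. (lam / (1 + lam * t)) ^ n
      * (\<Sum>k\<le>n. signed_stirling n k * \<Phi> k (ln (1 + lam * t))))" for n
  have "(G n has_real_derivative G (Suc n) t) (at t)" if "t \<in> S" for n t
  proof -
    define w where "w = lam / (1 + lam * t)"
    have "((\<lambda>t. ln (1 + lam * t)) has_real_derivative w) (at t)"
      using pos[OF that] by (auto intro!: derivative_eq_intros simp: w_def field_simps)
    from DERIV_chain2[OF \<Phi>[OF that] this]
    have dsum: "((\<lambda>t. \<Sum>k\<le>n. signed_stirling n k * \<Phi> k (ln (1 + lam * t)))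
        has_real_derivative
          (\<Sum>k\<le>n. signed_stirling n k * (\<Phi> (Suc k) (ln (1 + lam * t)) * w))) (at t)"
      by (intro DERIV_sum DERIV_cmult)
    have "((\<lambda>t. lam / (1 + lam * t)) has_real_derivative - w\<^sup>2) (at t)"
      using pos[OF that] by (auto intro!: derivative_eq_intros simp: w_def field_simps power2_eq_square)
    from DERIV_power[OF this, of n, folded w_def]
    have dpow: "((\<lambda>t. (lam / (1 + lam * t)) ^ n) has_real_derivative - real n * w ^ Suc n) (at t)"
      by (cases n) (simp_all add: power2_eq_square algebra_simps)
    have "- real n * w ^ Suc n * (\<Sum>k\<le>n. signed_stirling n k * \<Phi> k (ln (1 + lam * t)))
        + (\<Sum>k\<le>n. signed_stirling n k * (\<Phi> (Suc k) (ln (1 + lam * t)) * w))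
          * (lam / (1 + lam * t)) ^ n
        = G (Suc n) t"
      unfolding G_def w_def[symmetric] sum_signed_stirling_Suc
      by (simp add: sum_distrib_left sum_negf algebra_simps)
    then show ?thesis
      using DERIV_cong[OF DERIV_mult[OF dpow dsum]] unfolding G_def by blast
  qed
  moreover have "(\<lambda>t. \<Phi> 0 (ln (1 + lam * t))) = G 0"
    by (simp add: G_def signed_stirling_def)
  ultimately show ?thesis
    using deriv_funpow_eq_on_open[OF \<open>open S\<close>, of G] \<open>t \<in> S\<close> by (simp only: G_def)
qed

definition recip_deriv :: "real \<Rightarrow> nat \<Rightarrow> real \<Rightarrow> real" where
  "recip_deriv a k u = (-1) ^ k * fact k / (a + u) ^ Suc k"

lemma DERIV_recip_deriv:
  assumes "a + u \<noteq> 0"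
  shows "(recip_deriv a k has_real_derivative recip_deriv a (Suc k) u) (at u)"
proof -
  have "((\<lambda>u. (a + u) ^ Suc k) has_real_derivative real (Suc k) * (a + u) ^ k) (at u)"
    using DERIV_power[OF DERIV_add[OF DERIV_const[of a] DERIV_ident], of "Suc k" u] by simp
  from DERIV_cmult[OF DERIV_inverse_fun[OF this], of "(-1) ^ k * fact k"]
  have "(recip_deriv a k has_real_derivative (-1) ^ k * fact k
      * - (real (Suc k) * (a + u) ^ k * inverse (((a + u) ^ Suc k) ^ Suc (Suc 0)))) (at u)"
    using assms by (simp add: recip_deriv_def[abs_def] divide_inverse)
  moreover have "(-1) ^ k * fact k
      * - (real (Suc k) * (a + u) ^ k * inverse (((a + u) ^ Suc k) ^ Suc (Suc 0)))
      = recip_deriv a (Suc k) u"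
  proof -
    have "((a + u) ^ Suc k) ^ Suc (Suc 0) = (a + u) ^ k * (a + u) ^ Suc (Suc k)"
      by (simp add: power2_eq_square algebra_simps flip: power_add)
    then show ?thesis
      using assms by (simp add: recip_deriv_def fact_Suc divide_inverse)
  qed
  ultimately show ?thesis by simp
qed

definition powr_deriv :: "real \<Rightarrow> real \<Rightarrow> nat \<Rightarrow> real \<Rightarrow> real" where
  "powr_deriv lam x k u = falling x k / lam ^ k * (1 + u / lam) powr (x - real k)"

lemma DERIV_powr_deriv:
  assumes "lam \<noteq> 0" "1 + u / lam > 0"
  shows "(powr_deriv lam x k has_real_derivative powr_deriv lam x (Suc k) u) (at u)"
  unfolding powr_deriv_def using assms
  by (auto intro!: derivative_eq_intros simp: falling_def field_simps diff_diff_add)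

lemma powr_deriv_eq:
  assumes "lam \<noteq> 0" "1 + u / lam > 0"
  shows "powr_deriv lam x k u = falling x k / (lam + u) ^ k * (1 + u / lam) powr x"
proof -
  have "(1 + u / lam) ^ k * lam ^ k = (lam + u) ^ k"
    using assms(1) by (simp flip: power_mult_distrib add: field_simps)
  then show ?thesis
    using assms by (simp add: powr_deriv_def powr_diff powr_realpow field_simps)
qed

definition Psi_deriv :: "real \<Rightarrow> real \<Rightarrow> nat \<Rightarrow> real \<Rightarrow> real" where
  "Psi_deriv lam x r u =
     (\<Sum>i\<le>r. real (r choose i) * (2 * lam * recip_deriv (2 * lam) i u) * powr_deriv lam x (r - i) u)"

lemma DERIV_Psi_deriv:
  assumes "lam \<noteq> 0" "1 + u / lam > 0" "2 * lam + u \<noteq> 0"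
  shows "(Psi_deriv lam x r has_real_derivative Psi_deriv lam x (Suc r) u) (at u)"
proof -
  have "((\<lambda>u. 2 * lam * recip_deriv (2 * lam) k u) has_real_derivative
      2 * lam * recip_deriv (2 * lam) (Suc k) u) (at u)" for k
    using assms(3) by (intro DERIV_cmult DERIV_recip_deriv)
  from DERIV_Leibniz_sum[where f = "\<lambda>k u. 2 * lam * recip_deriv (2 * lam) k u"
      and g = "powr_deriv lam x" and u = u, OF this DERIV_powr_deriv[OF assms(1,2)]]
  show ?thesis unfolding Psi_deriv_def[abs_def] by simp
qed

lemma Ffun_eq_Psi_deriv: "Ffun x lam t = Psi_deriv lam x 0 (ln (1 + lam * t))"
  by (simp add: Ffun_def Psi_deriv_def recip_deriv_def powr_deriv_def falling_def)

lemma coeffA_eq_signed_stirling: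
  assumes "1 \<le> r" "r \<le> N" "i \<le> r"
  shows "coeffA i r N x
    = signed_stirling N r * (-1) ^ i * fact i * real (r choose i) * falling x (r - i)"
proof -
  have "fact (N - 1) * genH (N - 1) (r - 1) = real (stirling N r)"
    using fact_mult_genH_eq_stirling[of "N - 1" "r - 1"] assms by simp
  moreover have "(-1::real) ^ (N + i - r) = (-1) ^ (N + r) * (-1) ^ i"
  proof -
    obtain d where "N = r + d" using \<open>r \<le> N\<close> le_Suc_ex by blast
    then show ?thesis by (simp add: power_add)
  qed
  ultimately show ?thesis
    using assms by (simp add: coeffA_def signed_stirling_def changheeS_eq_binomial)
qed

lemma signed_stirling_mult_Psi_deriv:
  assumes "lam \<noteq> 0" "1 + u / lam > 0" "2 * lam + u \<noteq> 0" "1 \<le> r" "r \<le> N"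
  shows "signed_stirling N r * Psi_deriv lam x r u
    = (\<Sum>i=0..r. coeffA i r N x / (2 * lam + u) ^ i / (lam + u) ^ (r - i)) * Psi_deriv lam x 0 u"
proof -
  have "signed_stirling N r * (real (r choose i) * (2 * lam * recip_deriv (2 * lam) i u)
      * powr_deriv lam x (r - i) u)
    = coeffA i r N x / (2 * lam + u) ^ i / (lam + u) ^ (r - i) * Psi_deriv lam x 0 u"
    if "i \<le> r" for i
    using assms that
    by (simp add: coeffA_eq_signed_stirling powr_deriv_eq Psi_deriv_def recip_deriv_def
        falling_def[of x 0] field_simps)
  then show ?thesis
    by (simp add: Psi_deriv_def[of _ _ r] sum_distrib_left sum_distrib_right atMost_atLeast0)
qed

lemma eventually_nhds_0_ln_affine:
  fixes lam :: real
  assumes "lam \<noteq> 0"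
  shows "\<forall>\<^sub>F t in nhds 0. 1 + lam * t > 0 \<and> 1 + ln (1 + lam * t) / lam > 0
    \<and> 2 * lam + ln (1 + lam * t) \<noteq> 0"
proof -
  have lim: "((\<lambda>t. 1 + lam * t) \<longlongrightarrow> 1) (nhds 0)"
    by (auto intro!: tendsto_eq_intros filterlim_ident)
  then have "((\<lambda>t. \<bar>ln (1 + lam * t)\<bar>) \<longlongrightarrow> 0) (nhds 0)"
    using tendsto_rabs_zero tendsto_ln by fastforce
  from order_tendstoD(2)[OF this, of "\<bar>lam\<bar> / 2"] order_tendstoD(1)[OF lim, of 0] assms
  have "\<forall>\<^sub>F t in nhds 0. 1 + lam * t > 0 \<and> \<bar>ln (1 + lam * t)\<bar> < \<bar>lam\<bar> / 2"
    by (simp add: eventually_conj)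
  then show ?thesis
  proof (rule eventually_mono)
    fix t assume t: "1 + lam * t > 0 \<and> \<bar>ln (1 + lam * t)\<bar> < \<bar>lam\<bar> / 2"
    then have "\<bar>ln (1 + lam * t) / lam\<bar> < 1 / 2"
      using assms by (simp add: abs_divide field_simps)
    with t assms show "1 + lam * t > 0 \<and> 1 + ln (1 + lam * t) / lam > 0
      \<and> 2 * lam + ln (1 + lam * t) \<noteq> 0" by linarith
  qed
qed

theorem theorem3:
  fixes lam x :: real
  assumes "lam \<noteq> 0"
  shows "\<forall>\<^sub>F t in nhds 0. \<forall>N::nat. N \<ge> 1 \<longrightarrow>
    (deriv ^^ N) (Ffun x lam) t =
      lam ^ N / (1 + lam * t) ^ N *
      (\<Sum>r=1..N. \<Sum>i=0..r. coeffA i r N x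
          / (2 * lam + ln (1 + lam * t)) ^ i
          / (lam + ln (1 + lam * t)) ^ (r - i))
      * Ffun x lam t"
proof -
  obtain S where "open S" "0 \<in> S" and S: "\<And>t. t \<in> S \<Longrightarrow> 1 + lam * t > 0
      \<and> 1 + ln (1 + lam * t) / lam > 0 \<and> 2 * lam + ln (1 + lam * t) \<noteq> 0"
    using eventually_nhds_0_ln_affine[OF assms] unfolding eventually_nhds by blast
  have F: "Ffun x lam = (\<lambda>t. Psi_deriv lam x 0 (ln (1 + lam * t)))"
    by (simp add: fun_eq_iff Ffun_eq_Psi_deriv)
  show ?thesis unfolding eventually_nhds
  proof (intro exI[of _ S] conjI ballI allI impI \<open>open S\<close> \<open>0 \<in> S\<close>)
    fix t and N :: nat assume "t \<in> S" "N \<ge> 1"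
    let ?L = "ln (1 + lam * t)"
    have "(deriv ^^ N) (Ffun x lam) t
        = (lam / (1 + lam * t)) ^ N * (\<Sum>r\<le>N. signed_stirling N r * Psi_deriv lam x r ?L)"
      unfolding F using S \<open>t \<in> S\<close>
      by (intro deriv_funpow_comp_ln_affine[OF \<open>open S\<close>] DERIV_Psi_deriv assms) auto
    also have "(\<Sum>r\<le>N. signed_stirling N r * Psi_deriv lam x r ?L)
        = (\<Sum>r=1..N. signed_stirling N r * Psi_deriv lam x r ?L)"
      using \<open>N \<ge> 1\<close> by (simp add: atMost_atLeast0 sum.atLeast_Suc_atMost signed_stirling_def)
    also have "\<dots> = (\<Sum>r=1..N.
        (\<Sum>i=0..r. coeffA i r N x / (2 * lam + ?L) ^ i / (lam + ?L) ^ (r - i)) * Ffun x lam t)"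
      using S[OF \<open>t \<in> S\<close>] assms
      by (intro sum.cong refl) (simp add: signed_stirling_mult_Psi_deriv Ffun_eq_Psi_deriv)
    finally show "(deriv ^^ N) (Ffun x lam) t = lam ^ N / (1 + lam * t) ^ N *
        (\<Sum>r=1..N. \<Sum>i=0..r. coeffA i r N x / (2 * lam + ?L) ^ i / (lam + ?L) ^ (r - i))
        * Ffun x lam t"
      by (simp add: power_divide sum_distrib_right)
  qed
qed

end
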